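(* Let $\tau$ be a typical Euclidean triangle and let $S_\tau=\langle s_1,s_2,s_3\rangle\subset \mathrm{O}(2)$ (see context). Then $S_\tau$ admits the finite presentation $\langle x_1,x_2,x_3 \mid x_1^2,\ x_2^2,\ x_3^2,\ (x_1x_2x_3)^2\rangle$, with the generator $x_i$ corresponding to $s_i$ for $i=1,2,3$.
   Context: A Euclidean triangle $\tau=A_1A_2A_3$ has edges $e_i=A_jA_k$ and interior angles $\alpha_i$ at $A_i$, $\{i,j,k\}=\{1,2,3\}$; it is typical if $\alpha_1,\alpha_2,\alpha_3$ are linearly independent over $\mathbb{Q}$. Let $r_i$ be the reflection of the plane across the line containing $e_i$, and let $s_i\in\mathrm{O}(2)$ be its linear part, i.e. the linear reflection across the line through the origin parallel to $e_i$. $S_\tau$ is the subgroup of $\mathrm{O}(2)$ generated by $s_1,s_2,s_3$. *)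

theory Defs
  imports "HOL-Analysis.Analysis" "HOL-Algebra.Generated_Groups"
begin

definition O2 :: "((real^2) \<Rightarrow> (real^2)) monoid" where
  "O2 = \<lparr>carrier = {f. orthogonal_transformation f}, mult = (\<circ>), one = id\<rparr>"

definition lin_refl :: "real^2 \<Rightarrow> real^2 \<Rightarrow> real^2" where
  "lin_refl d v = (2 * (v \<bullet> d) / (d \<bullet> d)) *\<^sub>R d - v"

definition vec_angle :: "real^2 \<Rightarrow> real^2 \<Rightarrow> real" where
  "vec_angle u v = arccos ((u \<bullet> v) / (norm u * norm v))"

definition tri_angles :: "real^2 \<Rightarrow> real^2 \<Rightarrow> real^2 \<Rightarrow> real \<times> real \<times> real" where
  "tri_angles A1 A2 A3 =
     (vec_angle (A2 - A1) (A3 - A1), vec_angle (A1 - A2) (A3 - A2), vec_angle (A1 - A3) (A2 - A3))"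

definition typical_triangle :: "real^2 \<Rightarrow> real^2 \<Rightarrow> real^2 \<Rightarrow> bool" where
  "typical_triangle A1 A2 A3 \<longleftrightarrow> \<not> collinear {A1, A2, A3} \<and>
     (case tri_angles A1 A2 A3 of (a1, a2, a3) \<Rightarrow>
       (\<forall>q1 q2 q3. q1 \<in> \<rat> \<and> q2 \<in> \<rat> \<and> q3 \<in> \<rat> \<and> q1 * a1 + q2 * a2 + q3 * a3 = 0
          \<longrightarrow> q1 = 0 \<and> q2 = 0 \<and> q3 = 0))"

text \<open>The linear parts s1, s2, s3 of the reflections in the edge lines
  e1 = A2A3, e2 = A1A3, e3 = A1A2.\<close>
definition s1 :: "real^2 \<Rightarrow> real^2 \<Rightarrow> real^2 \<Rightarrow> real^2 \<Rightarrow> real^2" where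
  "s1 A1 A2 A3 = lin_refl (A3 - A2)"
definition s2 :: "real^2 \<Rightarrow> real^2 \<Rightarrow> real^2 \<Rightarrow> real^2 \<Rightarrow> real^2" where
  "s2 A1 A2 A3 = lin_refl (A3 - A1)"
definition s3 :: "real^2 \<Rightarrow> real^2 \<Rightarrow> real^2 \<Rightarrow> real^2 \<Rightarrow> real^2" where
  "s3 A1 A2 A3 = lin_refl (A2 - A1)"

definition S_tau :: "real^2 \<Rightarrow> real^2 \<Rightarrow> real^2 \<Rightarrow> ((real^2) \<Rightarrow> (real^2)) monoid" where
  "S_tau A1 A2 A3 = O2\<lparr>carrier := generate O2 {s1 A1 A2 A3, s2 A1 A2 A3, s3 A1 A2 A3}\<rparr>"

text \<open>Group G is presented by <x1,x2,x3 | x1^2, x2^2, x3^2, (x1 x2 x3)^2> via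
  xi -> gi: the gi generate G, satisfy the relations, and for every group H and
  elements h1 h2 h3 satisfying the relations there is a unique homomorphism G -> H
  with gi -> hi (universal property of the presented group).\<close>
definition rels3 :: "('a, 'b) monoid_scheme \<Rightarrow> 'a \<Rightarrow> 'a \<Rightarrow> 'a \<Rightarrow> bool" where
  "rels3 H a b c \<longleftrightarrow> a \<in> carrier H \<and> b \<in> carrier H \<and> c \<in> carrier H \<and>
     a \<otimes>\<^bsub>H\<^esub> a = \<one>\<^bsub>H\<^esub> \<and> b \<otimes>\<^bsub>H\<^esub> b = \<one>\<^bsub>H\<^esub> \<and> c \<otimes>\<^bsub>H\<^esub> c = \<one>\<^bsub>H\<^esub> \<and>
     (a \<otimes>\<^bsub>H\<^esub> b \<otimes>\<^bsub>H\<^esub> c) \<otimes>\<^bsub>H\<^esub> (a \<otimes>\<^bsub>H\<^esub> b \<otimes>\<^bsub>H\<^esub> c) = \<one>\<^bsub>H\<^esub>"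

end

theory Submission
  imports Defs
begin

text \<open>Identify the plane with \<open>\<complex>\<close>. The linear reflection in the line spanned by \<open>d\<close> is
  \<open>z \<mapsto> (d / \<bar>d\<bar>)\<^sup>2 \<cdot> z\<^sup>*\<close>, so \<open>s\<^sub>1 s\<^sub>2\<close> and \<open>s\<^sub>2 s\<^sub>3\<close> are the rotations by twice the (signed)
  angles \<open>\<alpha>\<^sub>3\<close> and \<open>\<alpha>\<^sub>1\<close> of the triangle. In any group, three involutions \<open>a, b, c\<close> with
  \<open>(abc)\<^sup>2 = 1\<close> make \<open>ab\<close> and \<open>bc\<close> commute, and \<open>a\<close> inverts both by conjugation; hence every
  element of the group they generate has the form \<open>a\<^sup>e (ab)\<^sup>m (bc)\<^sup>n\<close>. The presentation is
  faithful for \<open>S\<^sub>\<tau>\<close> iff these normal forms are pairwise distinct there, i.e. iff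
  \<open>\<plusminus>2m\<alpha>\<^sub>3 \<plusminus> 2n\<alpha>\<^sub>1 \<in> 2\<pi>\<int>\<close> forces \<open>m = n = 0\<close>. Since the angles sum to \<open>\<pi>\<close>, such a relation can be
  turned into a rational relation among \<open>\<alpha>\<^sub>1, \<alpha>\<^sub>2, \<alpha>\<^sub>3\<close>, which typicality excludes.\<close>

section \<open>Normal forms in a group generated by three involutions with \<open>(abc)\<^sup>2 = 1\<close>\<close>

lemma (in group) conj_int_pow:
  assumes "g \<in> carrier G" "y \<in> carrier G"
  shows "g \<otimes> y [^] (m::int) \<otimes> inv g = (g \<otimes> y \<otimes> inv g) [^] m"
proof -
  have "inv g \<otimes> (g \<otimes> z) = z" if "z \<in> carrier G" for z
    using assms that by (simp add: m_assoc[symmetric])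
  then have "(\<lambda>x. g \<otimes> x \<otimes> inv g) \<in> hom G G"
    using assms by (intro homI) (auto simp: m_assoc)
  from hom_int_pow[OF this assms(2) group_axioms group_axioms] show ?thesis
    by simp
qed

lemma (in group) conj_int_pow_inverted:
  assumes "g \<in> carrier G" "x \<in> carrier G" "g \<otimes> x \<otimes> inv g = inv x"
  shows "g \<otimes> x [^] (k::int) \<otimes> inv g = x [^] (- k)"
  using assms by (simp add: conj_int_pow int_pow_inv int_pow_neg)

lemma (in group) commuting_int_pows:
  assumes "x \<in> carrier G" "y \<in> carrier G" "x \<otimes> y = y \<otimes> x"
  shows "x [^] (m::int) \<otimes> y [^] (n::int) = y [^] n \<otimes> x [^] m"
proof -
  have "y \<otimes> x \<otimes> inv y = x"
    using assms by (simp add: inv_solve_right')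
  then have "y \<otimes> x [^] m \<otimes> inv y = x [^] m"
    using assms by (simp add: conj_int_pow)
  then have "y \<otimes> x [^] m = x [^] m \<otimes> y"
    using assms inv_solve_right' by (metis int_pow_closed m_closed)
  then have "x [^] m \<otimes> y \<otimes> inv (x [^] m) = y \<otimes> x [^] m \<otimes> inv (x [^] m)"
    by simp
  also have "\<dots> = y"
    using assms by (simp add: m_assoc)
  finally have "x [^] m \<otimes> y \<otimes> inv (x [^] m) = y" .
  then have "x [^] m \<otimes> y [^] n \<otimes> inv (x [^] m) = y [^] n"
    using assms by (simp add: conj_int_pow)
  then show ?thesis
    using assms inv_solve_right' by (metis int_pow_closed m_closed)
qed

definition rels3_nf :: "('a, 'b) monoid_scheme \<Rightarrow> 'a \<Rightarrow> 'a \<Rightarrow> 'a \<Rightarrow> bool \<times> int \<times> int \<Rightarrow> 'a"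
  where "rels3_nf G a b c = (\<lambda>(e, m, n).
    (if e then a else \<one>\<^bsub>G\<^esub>) \<otimes>\<^bsub>G\<^esub> ((a \<otimes>\<^bsub>G\<^esub> b) [^]\<^bsub>G\<^esub> m \<otimes>\<^bsub>G\<^esub> (b \<otimes>\<^bsub>G\<^esub> c) [^]\<^bsub>G\<^esub> n))"

text \<open>The group law of \<open>\<int>\<^sup>2 \<rtimes> \<int>/2\<close>, the flip acting on \<open>\<int>\<^sup>2\<close> by negation; it is
  the multiplication of normal forms \<open>a\<^sup>e (ab)\<^sup>m (bc)\<^sup>n\<close>.\<close>
fun nf_mult :: "bool \<times> int \<times> int \<Rightarrow> bool \<times> int \<times> int \<Rightarrow> bool \<times> int \<times> int" where
  "nf_mult (e, m, n) (e', m', n') =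
     (e \<noteq> e', (if e' then - m else m) + m', (if e' then - n else n) + n')"

lemma rels3_nf_hom:
  assumes "group G" "group H" "f \<in> hom G H" "a \<in> carrier G" "b \<in> carrier G" "c \<in> carrier G"
  shows "f (rels3_nf G a b c t) = rels3_nf H (f a) (f b) (f c) t"
proof -
  interpret group_hom G H f
    using assms by (simp add: group_hom_def group_hom_axioms_def)
  show ?thesis
    using assms by (auto simp: rels3_nf_def hom_int_pow split: prod.splits)
qed

locale rels3_group = group +
  fixes a b c
  assumes rels3: "rels3 G a b c"
begin

lemma gens_closed [simp]: "a \<in> carrier G" "b \<in> carrier G" "c \<in> carrier G"
  using rels3 by (auto simp: rels3_def)

lemma gens_square [simp]: "a \<otimes> a = \<one>" "b \<otimes> b = \<one>" "c \<otimes> c = \<one>"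
  using rels3 by (auto simp: rels3_def)

lemma gens_square_left [simp]:
  assumes "z \<in> carrier G"
  shows "a \<otimes> (a \<otimes> z) = z" "b \<otimes> (b \<otimes> z) = z" "c \<otimes> (c \<otimes> z) = z"
  using assms by (simp_all flip: m_assoc)

lemma inv_gens [simp]: "inv a = a" "inv b = b" "inv c = c"
  by (simp_all add: inv_equality)

lemma product_reverse: "a \<otimes> (b \<otimes> c) = c \<otimes> (b \<otimes> a)"
proof -
  have "inv (a \<otimes> b \<otimes> c) = a \<otimes> b \<otimes> c"
    using rels3 by (intro inv_equality) (auto simp: rels3_def)
  then show ?thesis
    by (simp add: inv_mult_group m_assoc)
qed

lemma rotations_commute: "(a \<otimes> b) \<otimes> (b \<otimes> c) = (b \<otimes> c) \<otimes> (a \<otimes> b)"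
proof -
  have "(b \<otimes> c) \<otimes> (a \<otimes> b) = a \<otimes> ((a \<otimes> b \<otimes> c) \<otimes> (a \<otimes> b \<otimes> c)) \<otimes> c"
    by (simp add: m_assoc)
  also have "\<dots> = (a \<otimes> b) \<otimes> (b \<otimes> c)"
    using rels3 by (simp add: rels3_def m_assoc)
  finally show ?thesis ..
qed

lemma flip_conj_rotations: "a \<otimes> (a \<otimes> b) \<otimes> inv a = inv (a \<otimes> b)" "a \<otimes> (b \<otimes> c) \<otimes> inv a = inv (b \<otimes> c)"
  by (simp_all add: m_assoc inv_mult_group product_reverse)

lemma flip_conj_rotation_pows:
  "a \<otimes> ((a \<otimes> b) [^] (m::int) \<otimes> (b \<otimes> c) [^] (n::int)) = ((a \<otimes> b) [^] (- m) \<otimes> (b \<otimes> c) [^] (- n)) \<otimes> a"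
proof -
  have "a \<otimes> ((a \<otimes> b) [^] m \<otimes> (b \<otimes> c) [^] n) \<otimes> inv a
      = (a \<otimes> (a \<otimes> b) [^] m \<otimes> inv a) \<otimes> (a \<otimes> (b \<otimes> c) [^] n \<otimes> inv a)"
    by (simp add: m_assoc)
  also have "\<dots> = (a \<otimes> b) [^] (- m) \<otimes> (b \<otimes> c) [^] (- n)"
    using conj_int_pow_inverted[OF _ _ flip_conj_rotations(1)]
      conj_int_pow_inverted[OF _ _ flip_conj_rotations(2)] by simp
  finally show ?thesis
    by (simp add: inv_solve_right' del: inv_gens)
qed

lemma rotation_pows_mult:
  "((a \<otimes> b) [^] (m::int) \<otimes> (b \<otimes> c) [^] (n::int)) \<otimes> ((a \<otimes> b) [^] (m'::int) \<otimes> (b \<otimes> c) [^] (n'::int))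
    = (a \<otimes> b) [^] (m + m') \<otimes> (b \<otimes> c) [^] (n + n')"
proof -
  have "(b \<otimes> c) [^] n \<otimes> (a \<otimes> b) [^] m' = (a \<otimes> b) [^] m' \<otimes> (b \<otimes> c) [^] n"
    by (rule commuting_int_pows) (simp_all add: rotations_commute)
  then show ?thesis
    by (simp add: m_assoc int_pow_mult flip: m_assoc[of "(b \<otimes> c) [^] n"])
qed

abbreviation nf :: "bool \<times> int \<times> int \<Rightarrow> 'a" where
  "nf \<equiv> rels3_nf G a b c"

lemma nf_closed [simp]: "nf t \<in> carrier G"
  by (auto simp: rels3_nf_def split: prod.splits)

lemma nf_mult: "nf t \<otimes> nf t' = nf (nf_mult t t')"
proof -
  obtain e m n e' m' n' where t: "t = (e, m, n)" and t': "t' = (e', m', n')"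
    by (cases t, cases t') auto
  define x where "x = (if e then a else \<one>)"
  have x: "x \<in> carrier G"
    by (simp add: x_def)
  show ?thesis
  proof (cases e')
    case False
    then show ?thesis
      using x by (simp add: t t' rels3_nf_def flip: x_def add: m_assoc flip: rotation_pows_mult)
  next
    case True
    have swap: "((a \<otimes> b) [^] m \<otimes> (b \<otimes> c) [^] n) \<otimes> a
        = a \<otimes> ((a \<otimes> b) [^] (- m) \<otimes> (b \<otimes> c) [^] (- n))"
      using flip_conj_rotation_pows[of "- m" "- n"] by simp
    have "nf t \<otimes> nf t'
        = x \<otimes> (((a \<otimes> b) [^] m \<otimes> (b \<otimes> c) [^] n) \<otimes> a) \<otimes> ((a \<otimes> b) [^] m' \<otimes> (b \<otimes> c) [^] n')"
      using True x by (simp add: t t' rels3_nf_def m_assoc flip: x_def)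
    also have "\<dots> = (x \<otimes> a) \<otimes>
        (((a \<otimes> b) [^] (- m) \<otimes> (b \<otimes> c) [^] (- n)) \<otimes> ((a \<otimes> b) [^] m' \<otimes> (b \<otimes> c) [^] n'))"
      using x by (simp add: swap m_assoc)
    also have "\<dots> = (x \<otimes> a) \<otimes> ((a \<otimes> b) [^] (- m + m') \<otimes> (b \<otimes> c) [^] (- n + n'))"
      by (simp only: rotation_pows_mult)
    also have "x \<otimes> a = (if e then \<one> else a)"
      by (simp add: x_def)
    finally show ?thesis
      using True by (simp add: t t' rels3_nf_def)
  qed
qed

lemma nf_gens: "nf (False, 0, 0) = \<one>" "nf (True, 0, 0) = a" "nf (True, 1, 0) = b" "nf (True, 1, 1) = c"
  by (simp_all add: rels3_nf_def m_assoc)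

lemma generate_subset_range_nf: "generate G {a, b, c} \<subseteq> range nf"
proof
  fix x assume "x \<in> generate G {a, b, c}"
  then show "x \<in> range nf"
  proof (induction rule: generate.induct)
    case one
    then show ?case by (metis nf_gens(1) rangeI)
  next
    case (incl h)
    then show ?case by (metis nf_gens(2-4) empty_iff insert_iff rangeI)
  next
    case (inv h)
    then show ?case by (metis nf_gens(2-4) inv_gens empty_iff insert_iff rangeI)
  next
    case (eng h h')
    then obtain t t' where "h = nf t" "h' = nf t'" by blast
    then show ?case by (metis nf_mult rangeI)
  qed
qed

theorem universal_property_if_nf_inj:
  assumes gen: "carrier G \<subseteq> generate G {a, b, c}" and inj: "inj nf"
    and H: "group H" "rels3 H h1 h2 h3"
  shows "\<exists>\<phi> \<in> hom G H. \<phi> a = h1 \<and> \<phi> b = h2 \<and> \<phi> c = h3 \<and>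
    (\<forall>\<psi> \<in> hom G H. \<psi> a = h1 \<and> \<psi> b = h2 \<and> \<psi> c = h3 \<longrightarrow> (\<forall>x \<in> carrier G. \<psi> x = \<phi> x))"
proof -
  interpret H: rels3_group H h1 h2 h3
    using H by (simp add: rels3_group_def rels3_group_axioms_def)
  have carrier_nf: "carrier G \<subseteq> range nf"
    using gen generate_subset_range_nf by blast
  define \<phi> where "\<phi> = H.nf \<circ> the_inv nf"
  have \<phi>_nf: "\<phi> (nf t) = H.nf t" for t
    by (simp add: \<phi>_def the_inv_f_f[OF inj])
  have "\<phi> \<in> hom G H"
  proof (rule homI)
    fix x y assume "x \<in> carrier G" "y \<in> carrier G"
    then obtain t t' where "x = nf t" "y = nf t'"
      using carrier_nf by blast
    then show "\<phi> x \<in> carrier H" "\<phi> (x \<otimes> y) = \<phi> x \<otimes>\<^bsub>H\<^esub> \<phi> y"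
      by (simp_all add: \<phi>_nf nf_mult H.nf_mult)
  qed
  moreover have "\<phi> a = h1" "\<phi> b = h2" "\<phi> c = h3"
    by (metis \<phi>_nf nf_gens H.nf_gens)+
  moreover have "\<psi> x = \<phi> x"
    if "\<psi> \<in> hom G H" "\<psi> a = h1" "\<psi> b = h2" "\<psi> c = h3" "x \<in> carrier G" for \<psi> x
  proof -
    obtain t where "x = nf t"
      using carrier_nf \<open>x \<in> carrier G\<close> by blast
    moreover have "\<psi> (nf t) = H.nf t"
      using rels3_nf_hom[OF group_axioms H(1) that(1) gens_closed] that(2-4) by simp
    ultimately show ?thesis
      by (simp add: \<phi>_nf)
  qed
  ultimately show ?thesis
    by blast
qed

end

section \<open>The plane as \<open>\<complex>\<close>: rotations and reflections\<close>

definition cpx :: "real^2 \<Rightarrow> complex" where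
  "cpx v = Complex (v$1) (v$2)"

definition vec_of_cpx :: "complex \<Rightarrow> real^2" where
  "vec_of_cpx z = vector [Re z, Im z]"

lemma vec_of_cpx_cpx [simp]: "vec_of_cpx (cpx v) = v"
  by (simp add: vec_of_cpx_def cpx_def vec_eq_iff forall_2)

lemma cpx_vec_of_cpx [simp]: "cpx (vec_of_cpx z) = z"
  by (simp add: vec_of_cpx_def cpx_def complex_eq_iff)

lemma cpx_eq_iff [simp]: "cpx u = cpx v \<longleftrightarrow> u = v"
  by (metis vec_of_cpx_cpx)

lemma cpx_eq_0_iff [simp]: "cpx v = 0 \<longleftrightarrow> v = 0"
  by (simp add: cpx_def complex_eq_iff vec_eq_iff forall_2)

lemma cpx_diff: "cpx (u - v) = cpx u - cpx v"
  by (simp add: cpx_def complex_eq_iff)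

lemma inner_eq_Re_cnj_cpx: "u \<bullet> v = Re (cnj (cpx u) * cpx v)"
  by (simp add: inner_vec_def sum_2 cpx_def)

lemma norm_eq_cmod_cpx: "norm v = cmod (cpx v)"
  using norm_eq_sqrt_inner[of v] by (simp add: inner_vec_def sum_2 cpx_def cmod_def power2_eq_square)

lemma cpx_scaleR: "cpx (r *\<^sub>R v) = of_real r * cpx v"
  by (simp add: cpx_def complex_eq_iff)

definition crot :: "complex \<Rightarrow> real^2 \<Rightarrow> real^2" where
  "crot c v = vec_of_cpx (c * cpx v)"

definition cflip :: "complex \<Rightarrow> real^2 \<Rightarrow> real^2" where
  "cflip c v = vec_of_cpx (c * cnj (cpx v))"

definition refl_unit :: "real^2 \<Rightarrow> complex" where
  "refl_unit d = cpx d / cnj (cpx d)"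

lemma lin_refl_eq_cflip:
  assumes "d \<noteq> 0"
  shows "lin_refl d = cflip (refl_unit d)"
proof
  fix v
  define D V where "D = cpx d" and "V = cpx v"
  have "D \<noteq> 0" using assms by (simp add: D_def)
  have "of_real (2 * Re (cnj V * D)) = cnj V * D + V * cnj D"
    using complex_add_cnj[of "cnj V * D"] by simp
  moreover have "of_real (Re (cnj D * D)) = D * cnj D"
    by (simp add: complex_mult_cnj mult.commute)
  ultimately have "cpx (lin_refl d v) = (cnj V * D + V * cnj D) / (D * cnj D) * D - V"
    by (simp add: lin_refl_def cpx_diff cpx_scaleR inner_eq_Re_cnj_cpx D_def V_def)
  also have "\<dots> = D / cnj D * cnj V"
    using \<open>D \<noteq> 0\<close> by (simp add: field_simps)
  finally show "lin_refl d v = cflip (refl_unit d) v"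
    by (metis cflip_def refl_unit_def vec_of_cpx_cpx D_def V_def)
qed

lemma crot_comp_crot: "crot a \<circ> crot b = crot (a * b)"
  by (simp add: crot_def fun_eq_iff mult.assoc)

lemma cflip_comp_cflip: "cflip a \<circ> cflip b = crot (a * cnj b)"
  by (simp add: crot_def cflip_def fun_eq_iff mult.assoc)

lemma crot_comp_cflip: "crot a \<circ> cflip b = cflip (a * b)"
  by (simp add: crot_def cflip_def fun_eq_iff mult.assoc)

lemma cflip_comp_crot: "cflip a \<circ> crot b = cflip (a * cnj b)"
  by (simp add: crot_def cflip_def fun_eq_iff mult.assoc)

lemma crot_1: "crot 1 = id"
  by (simp add: crot_def fun_eq_iff)

lemma crot_eq_iff: "crot a = crot b \<longleftrightarrow> a = b"
  by (metis crot_def cpx_vec_of_cpx mult.right_neutral)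

lemma cflip_eq_iff: "cflip a = cflip b \<longleftrightarrow> a = b"
  by (metis cflip_def complex_cnj_one cpx_vec_of_cpx mult.right_neutral)

lemma cmod_refl_unit: "d \<noteq> 0 \<Longrightarrow> cmod (refl_unit d) = 1"
  by (simp add: refl_unit_def norm_divide)

lemma unit_mult_cnj: "cmod c = 1 \<Longrightarrow> c * cnj c = 1"
  using complex_norm_square[of c] by simp

lemma cflip_comp_self: "cmod c = 1 \<Longrightarrow> cflip c \<circ> cflip c = id"
  by (simp add: cflip_comp_cflip unit_mult_cnj crot_1)

lemma cflip_neq_crot:
  assumes "a \<noteq> 0"
  shows "cflip a \<noteq> crot b"
proof
  assume eq: "cflip a = crot b"
  have "a = b" using fun_cong[OF eq, of "vec_of_cpx 1"] by (simp add: cflip_def crot_def flip: cpx_eq_iff)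
  moreover have "- a * \<i> = b * \<i>"
    using fun_cong[OF eq, of "vec_of_cpx \<i>"] by (simp add: cflip_def crot_def flip: cpx_eq_iff)
  ultimately show False using assms by simp
qed

lemma vec_of_cpx_add: "vec_of_cpx (z + w) = vec_of_cpx z + vec_of_cpx w"
  by (simp add: vec_of_cpx_def vec_eq_iff forall_2)

lemma vec_of_cpx_scaleR: "vec_of_cpx (of_real r * z) = r *\<^sub>R vec_of_cpx z"
  by (simp add: vec_of_cpx_def vec_eq_iff forall_2)

lemma cpx_add: "cpx (u + v) = cpx u + cpx v"
  by (simp add: cpx_def complex_eq_iff)

lemma orthogonal_transformation_crot: "cmod c = 1 \<Longrightarrow> orthogonal_transformation (crot c)"
  unfolding orthogonal_transformation
proof (intro conjI allI)
  show "linear (crot c)"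
    by (rule linearI)
      (simp_all add: crot_def cpx_add cpx_scaleR distrib_left vec_of_cpx_add mult.left_commute
        flip: vec_of_cpx_scaleR)
qed (simp add: crot_def norm_eq_cmod_cpx norm_mult)

lemma orthogonal_transformation_cflip: "cmod c = 1 \<Longrightarrow> orthogonal_transformation (cflip c)"
  unfolding orthogonal_transformation
proof (intro conjI allI)
  show "linear (cflip c)"
    by (rule linearI)
      (simp_all add: cflip_def cpx_add cpx_scaleR distrib_left vec_of_cpx_add mult.left_commute
        flip: vec_of_cpx_scaleR)
qed (simp add: cflip_def norm_eq_cmod_cpx norm_mult)

lemma O2_simps [simp]:
  "carrier O2 = {f. orthogonal_transformation f}" "mult O2 = (\<circ>)" "one O2 = id"
  by (simp_all add: O2_def)

lemma group_O2: "group O2"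
proof (rule groupI)
  fix f assume "f \<in> carrier O2"
  then have f: "orthogonal_transformation f" by simp
  show "\<exists>g\<in>carrier O2. g \<otimes>\<^bsub>O2\<^esub> f = \<one>\<^bsub>O2\<^esub>"
  proof
    show "Hilbert_Choice.inv f \<in> carrier O2" using orthogonal_transformation_inv[OF f] by simp
    show "Hilbert_Choice.inv f \<otimes>\<^bsub>O2\<^esub> f = \<one>\<^bsub>O2\<^esub>"
      using orthogonal_transformation_bij[OF f] by (simp add: bij_is_inj)
  qed
qed (auto simp: orthogonal_transformation_compose comp_assoc id_def)

lemma crot_int_pow_O2:
  assumes "cmod u = 1"
  shows "crot u [^]\<^bsub>O2\<^esub> (m::int) = crot (u powi m)"
proof -
  interpret O2: group O2 by (rule group_O2)
  have u: "crot u \<in> carrier O2" "u \<noteq> 0"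
    using assms orthogonal_transformation_crot by auto
  have inv: "inv\<^bsub>O2\<^esub> (crot u) = crot (inverse u)"
    using u by (intro O2.inv_equality) (auto simp: crot_comp_crot crot_1 assms
        orthogonal_transformation_crot norm_inverse)
  show ?thesis
  proof (induction m rule: int_induct[where k=0])
    case (step1 i)
    then show ?case
      using O2.int_pow_mult[OF u(1), of i 1] u by (simp add: crot_comp_crot power_int_add_1)
  next
    case (step2 i)
    then show ?case
      using O2.int_pow_diff[OF u(1), of i 1] u inv
      by (simp add: crot_comp_crot power_int_diff field_simps)
  qed (simp add: crot_1)
qed

section \<open>Angles of a triangle\<close>

definition angle_unit :: "complex \<Rightarrow> complex \<Rightarrow> complex" where
  "angle_unit z w = cnj z * w / of_real (cmod z * cmod w)"

lemma unit_eq_cis_arccos: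
  assumes "cmod w = 1"
  shows "w = cis (arccos (Re w)) \<or> w = cis (- arccos (Re w))"
proof -
  have Re: "\<bar>Re w\<bar> \<le> 1"
    using abs_Re_le_cmod[of w] assms by simp
  have "(Im w)\<^sup>2 = 1 - (Re w)\<^sup>2"
    using cmod_power2[of w] assms by simp
  then have "sin (arccos (Re w)) = \<bar>Im w\<bar>"
    using sin_arccos_abs[OF Re] by (simp flip: real_sqrt_abs)
  moreover have "cos (arccos (Re w)) = Re w"
    using Re by (simp add: abs_le_iff)
  ultimately show ?thesis
    by (cases "Im w \<ge> 0") (simp_all add: complex_eq_iff)
qed

lemma angle_unit_eq_cis_vec_angle:
  assumes "U \<noteq> 0" "V \<noteq> 0"
  obtains \<epsilon> :: real where "\<epsilon> \<in> {-1, 1}" "angle_unit (cpx U) (cpx V) = cis (\<epsilon> * vec_angle U V)"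
proof -
  have "cmod (angle_unit (cpx U) (cpx V)) = 1"
    using assms by (simp add: angle_unit_def norm_divide norm_mult)
  moreover have "Re (angle_unit (cpx U) (cpx V)) = (U \<bullet> V) / (norm U * norm V)"
    by (simp add: angle_unit_def inner_eq_Re_cnj_cpx norm_eq_cmod_cpx Re_divide_of_real)
  ultimately show ?thesis
    using unit_eq_cis_arccos that[of 1] that[of "-1"] by (fastforce simp: vec_angle_def)
qed

lemma of_real_cmod_square: "(complex_of_real (cmod z))\<^sup>2 = z * cnj z"
  using complex_norm_square[of z] by simp

lemma angle_unit_square:
  assumes "z \<noteq> 0" "w \<noteq> 0"
  shows "(angle_unit z w)\<^sup>2 = w / cnj w * cnj (z / cnj z)"
proof -
  have "(of_real (cmod z * cmod w))\<^sup>2 = z * cnj z * (w * cnj w)"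
    by (simp add: power_mult_distrib of_real_cmod_square)
  then show ?thesis
    using assms by (simp add: angle_unit_def power_divide field_simps power2_eq_square)
qed

lemma angle_units_of_triangle:
  assumes "a \<noteq> 0" "b \<noteq> 0" "a \<noteq> b"
  shows "angle_unit a b * angle_unit (- b) (a - b) = - angle_unit (- a) (b - a)"
proof -
  define B where "B = complex_of_real (cmod b)"
  have "B \<noteq> 0" using assms by (simp add: B_def)
  have "angle_unit a b * angle_unit (- b) (a - b)
      = cnj a * b * (cnj (- b) * (a - b)) / (of_real (cmod a * cmod (a - b)) * B\<^sup>2)"
    by (simp add: angle_unit_def B_def power2_eq_square times_divide_times_eq mult_ac)
  also have "cnj a * b * (cnj (- b) * (a - b)) = - (cnj a * (a - b)) * B\<^sup>2"
    by (simp add: B_def of_real_cmod_square algebra_simps)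
  also have "- (cnj a * (a - b)) * B\<^sup>2 / (of_real (cmod a * cmod (a - b)) * B\<^sup>2)
      = - (cnj a * (a - b)) / of_real (cmod a * cmod (a - b))"
    using \<open>B \<noteq> 0\<close> by simp
  also have "\<dots> = - angle_unit (- a) (b - a)"
    by (simp add: angle_unit_def norm_minus_commute[of b a] minus_divide_left algebra_simps)
  finally show ?thesis .
qed

lemma triangle_rotation_units:
  assumes "\<not> collinear {A1, A2, A3}" "tri_angles A1 A2 A3 = (\<alpha>1, \<alpha>2, \<alpha>3)"
  obtains \<epsilon>1 \<epsilon>2 \<epsilon>3 :: real where "\<epsilon>1 \<in> {-1, 1}" "\<epsilon>2 \<in> {-1, 1}" "\<epsilon>3 \<in> {-1, 1}"
    "cis (\<epsilon>1 * \<alpha>1 + \<epsilon>3 * \<alpha>3 - \<epsilon>2 * \<alpha>2) = -1"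
    "refl_unit (A3 - A2) * cnj (refl_unit (A3 - A1)) = cis (2 * (\<epsilon>3 * \<alpha>3))"
    "refl_unit (A3 - A1) * cnj (refl_unit (A2 - A1)) = cis (2 * (\<epsilon>1 * \<alpha>1))"
proof -
  have "A1 \<noteq> A2" "A1 \<noteq> A3" "A2 \<noteq> A3"
    using assms(1) by (auto simp: insert_commute)
  define a b where "a = cpx (A2 - A1)" and "b = cpx (A3 - A1)"
  have ab: "a \<noteq> 0" "b \<noteq> 0" "a \<noteq> b"
    using \<open>A1 \<noteq> A2\<close> \<open>A1 \<noteq> A3\<close> \<open>A2 \<noteq> A3\<close> by (auto simp: a_def b_def cpx_diff)
  have edges: "cpx (A1 - A2) = - a" "cpx (A3 - A2) = b - a" "cpx (A1 - A3) = - b" "cpx (A2 - A3) = a - b"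
    by (simp_all add: a_def b_def cpx_diff)
  have \<alpha>: "\<alpha>1 = vec_angle (A2 - A1) (A3 - A1)" "\<alpha>2 = vec_angle (A1 - A2) (A3 - A2)"
    "\<alpha>3 = vec_angle (A1 - A3) (A2 - A3)"
    using assms(2) by (simp_all add: tri_angles_def)
  obtain \<epsilon>1 where \<epsilon>1: "\<epsilon>1 \<in> {-1, 1}" and w1: "angle_unit a b = cis (\<epsilon>1 * \<alpha>1)"
    using angle_unit_eq_cis_vec_angle[of "A2 - A1" "A3 - A1"] \<open>A1 \<noteq> A2\<close> \<open>A1 \<noteq> A3\<close>
    by (auto simp: \<alpha> a_def b_def)
  obtain \<epsilon>2 where \<epsilon>2: "\<epsilon>2 \<in> {-1, 1}" and w2: "angle_unit (- a) (b - a) = cis (\<epsilon>2 * \<alpha>2)"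
    using angle_unit_eq_cis_vec_angle[of "A1 - A2" "A3 - A2"] \<open>A1 \<noteq> A2\<close> \<open>A2 \<noteq> A3\<close>
    by (auto simp: \<alpha> edges)
  obtain \<epsilon>3 where \<epsilon>3: "\<epsilon>3 \<in> {-1, 1}" and w3: "angle_unit (- b) (a - b) = cis (\<epsilon>3 * \<alpha>3)"
    using angle_unit_eq_cis_vec_angle[of "A1 - A3" "A2 - A3"] \<open>A1 \<noteq> A3\<close> \<open>A2 \<noteq> A3\<close>
    by (auto simp: \<alpha> edges)
  show ?thesis
  proof (rule that[OF \<epsilon>1 \<epsilon>2 \<epsilon>3])
    have "cis (\<epsilon>1 * \<alpha>1) * cis (\<epsilon>3 * \<alpha>3) = - cis (\<epsilon>2 * \<alpha>2)"
      using angle_units_of_triangle[OF ab] by (simp add: w1 w2 w3 mult.commute)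
    then show "cis (\<epsilon>1 * \<alpha>1 + \<epsilon>3 * \<alpha>3 - \<epsilon>2 * \<alpha>2) = -1"
      by (simp add: cis_mult flip: cis_divide)
    have "cis (2 * (\<epsilon>3 * \<alpha>3)) = (angle_unit (- b) (a - b))\<^sup>2"
      by (simp add: w3 power2_eq_square cis_mult mult_ac)
    also have "\<dots> = refl_unit (A3 - A2) * cnj (refl_unit (A3 - A1))"
      using ab angle_unit_square[of "- b" "a - b"] by (simp add: refl_unit_def edges field_simps flip: b_def)
    finally show "refl_unit (A3 - A2) * cnj (refl_unit (A3 - A1)) = cis (2 * (\<epsilon>3 * \<alpha>3))" ..
    have "cis (2 * (\<epsilon>1 * \<alpha>1)) = (angle_unit a b)\<^sup>2"
      by (simp add: w1 power2_eq_square cis_mult mult_ac)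
    also have "\<dots> = refl_unit (A3 - A1) * cnj (refl_unit (A2 - A1))"
      using ab by (simp add: angle_unit_square refl_unit_def flip: a_def b_def)
    finally show "refl_unit (A3 - A1) * cnj (refl_unit (A2 - A1)) = cis (2 * (\<epsilon>1 * \<alpha>1))" ..
  qed
qed

lemma rationally_independent_angles_no_relation:
  fixes \<alpha>1 \<alpha>2 \<alpha>3 \<epsilon>1 \<epsilon>2 \<epsilon>3 :: real and p q j k :: int
  assumes indep: "\<forall>q1 q2 q3. q1 \<in> \<rat> \<and> q2 \<in> \<rat> \<and> q3 \<in> \<rat> \<and> q1 * \<alpha>1 + q2 * \<alpha>2 + q3 * \<alpha>3 = 0
      \<longrightarrow> q1 = 0 \<and> q2 = 0 \<and> q3 = 0"
    and \<epsilon>: "\<epsilon>1 \<in> {-1, 1}" "\<epsilon>2 \<in> {-1, 1}" "\<epsilon>3 \<in> {-1, 1}"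
    and angle_sum: "\<epsilon>1 * \<alpha>1 + \<epsilon>3 * \<alpha>3 - \<epsilon>2 * \<alpha>2 = (2 * of_int k + 1) * pi"
    and relation: "p * (\<epsilon>3 * \<alpha>3) + q * (\<epsilon>1 * \<alpha>1) = j * pi"
  shows "p = 0 \<and> q = 0"
proof -
  text \<open>Eliminating \<open>\<pi>\<close> between the two equations leaves a rational relation among the angles.\<close>
  define q1 q2 q3 where "q1 = \<epsilon>1 * ((2 * k + 1) * q - j)" and "q2 = \<epsilon>2 * j"
    and "q3 = \<epsilon>3 * ((2 * k + 1) * p - j)"
  have "q1 * \<alpha>1 + q2 * \<alpha>2 + q3 * \<alpha>3
      = (2 * k + 1) * (p * (\<epsilon>3 * \<alpha>3) + q * (\<epsilon>1 * \<alpha>1)) - j * (\<epsilon>1 * \<alpha>1 + \<epsilon>3 * \<alpha>3 - \<epsilon>2 * \<alpha>2)"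
    by (simp add: q1_def q2_def q3_def algebra_simps)
  also have "\<dots> = 0"
    by (simp add: angle_sum relation)
  finally have "q1 * \<alpha>1 + q2 * \<alpha>2 + q3 * \<alpha>3 = 0" .
  moreover have "\<epsilon>1 \<in> \<rat>" "\<epsilon>2 \<in> \<rat>" "\<epsilon>3 \<in> \<rat>"
    using \<epsilon> by auto
  then have "q1 \<in> \<rat>" "q2 \<in> \<rat>" "q3 \<in> \<rat>"
    by (simp_all add: q1_def q2_def q3_def)
  ultimately have "q1 = 0" "q2 = 0" "q3 = 0"
    using indep by blast+
  moreover have "\<epsilon>1 \<noteq> 0" "\<epsilon>2 \<noteq> 0" "\<epsilon>3 \<noteq> 0"
    using \<epsilon> by auto
  ultimately have "j = 0" "(2 * k + 1) * q = 0" "(2 * k + 1) * p = 0"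
    unfolding q1_def q2_def q3_def by (simp_all flip: of_int_mult of_int_diff)
  moreover have "2 * k + 1 \<noteq> 0"
    by presburger
  ultimately show ?thesis
    by simp
qed

lemma typical_triangle_rotations_independent:
  fixes p q :: int
  assumes "typical_triangle A1 A2 A3"
    and "(refl_unit (A3 - A2) * cnj (refl_unit (A3 - A1))) powi p
       * (refl_unit (A3 - A1) * cnj (refl_unit (A2 - A1))) powi q = 1"
  shows "p = 0 \<and> q = 0"
proof -
  obtain \<alpha>1 \<alpha>2 \<alpha>3 where \<alpha>: "tri_angles A1 A2 A3 = (\<alpha>1, \<alpha>2, \<alpha>3)"
    by (rule prod_cases3)
  have noncollinear: "\<not> collinear {A1, A2, A3}"
    and indep: "\<forall>q1 q2 q3. q1 \<in> \<rat> \<and> q2 \<in> \<rat> \<and> q3 \<in> \<rat> \<and> q1 * \<alpha>1 + q2 * \<alpha>2 + q3 * \<alpha>3 = 0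
      \<longrightarrow> q1 = 0 \<and> q2 = 0 \<and> q3 = 0"
    using assms(1) unfolding typical_triangle_def \<alpha> prod.case by blast+
  obtain \<epsilon>1 \<epsilon>2 \<epsilon>3 where \<epsilon>: "\<epsilon>1 \<in> {-1, 1}" "\<epsilon>2 \<in> {-1, 1}" "\<epsilon>3 \<in> {-1, 1}"
    and sum: "cis (\<epsilon>1 * \<alpha>1 + \<epsilon>3 * \<alpha>3 - \<epsilon>2 * \<alpha>2) = -1"
    and u: "refl_unit (A3 - A2) * cnj (refl_unit (A3 - A1)) = cis (2 * (\<epsilon>3 * \<alpha>3))"
    and v: "refl_unit (A3 - A1) * cnj (refl_unit (A2 - A1)) = cis (2 * (\<epsilon>1 * \<alpha>1))"
    using triangle_rotation_units[OF noncollinear \<alpha>] by blast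
  from arg_cong[OF sum, of Re] have "cos (\<epsilon>1 * \<alpha>1 + \<epsilon>3 * \<alpha>3 - \<epsilon>2 * \<alpha>2) = -1"
    by (simp only: cis.sel uminus_complex.sel one_complex.sel)
  then obtain k :: int where k: "\<epsilon>1 * \<alpha>1 + \<epsilon>3 * \<alpha>3 - \<epsilon>2 * \<alpha>2 = (2 * of_int k + 1) * pi"
    using cos_eq_minus1 by blast
  have "cis (p * (2 * (\<epsilon>3 * \<alpha>3)) + q * (2 * (\<epsilon>1 * \<alpha>1))) = 1"
    using assms(2) unfolding u v cis_power_int cis_mult .
  from arg_cong[OF this, of Re] have "cos (p * (2 * (\<epsilon>3 * \<alpha>3)) + q * (2 * (\<epsilon>1 * \<alpha>1))) = 1"
    by (simp only: cis.sel one_complex.sel)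
  then obtain j :: int where "p * (2 * (\<epsilon>3 * \<alpha>3)) + q * (2 * (\<epsilon>1 * \<alpha>1)) = of_int j * 2 * pi"
    using cos_one_2pi_int by blast
  then have "p * (\<epsilon>3 * \<alpha>3) + q * (\<epsilon>1 * \<alpha>1) = j * pi"
    by (simp add: algebra_simps)
  then show ?thesis
    using rationally_independent_angles_no_relation[OF indep \<epsilon> k] by blast
qed

section \<open>Groups generated by three reflections\<close>

context
  fixes X c1 c2 c3
  assumes X: "subgroup X O2" "cflip c1 \<in> X" "cflip c2 \<in> X" "cflip c3 \<in> X"
    and units: "cmod c1 = 1" "cmod c2 = 1" "cmod c3 = 1"
begin

lemma rels3_cflips: "rels3 (O2\<lparr>carrier := X\<rparr>) (cflip c1) (cflip c2) (cflip c3)"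
proof -
  have "cflip c1 \<circ> cflip c2 \<circ> cflip c3 = cflip (c1 * cnj c2 * c3)"
    by (simp add: cflip_comp_cflip crot_comp_cflip)
  then show ?thesis
    using X units by (simp add: rels3_def cflip_comp_self norm_mult)
qed

lemma rels3_nf_cflips:
  "rels3_nf (O2\<lparr>carrier := X\<rparr>) (cflip c1) (cflip c2) (cflip c3) (e, m, n)
    = (if e then cflip (c1 * cnj ((c1 * cnj c2) powi m * (c2 * cnj c3) powi n))
       else crot ((c1 * cnj c2) powi m * (c2 * cnj c3) powi n))"
proof -
  interpret O2: group O2 by (rule group_O2)
  have "cflip c1 \<circ> cflip c2 \<in> X" "cflip c2 \<circ> cflip c3 \<in> X"
    using X subgroup.m_closed[OF X(1)] by auto
  then show ?thesis
    using units
    by (simp add: rels3_nf_def cflip_comp_cflip crot_comp_crot cflip_comp_crot crot_1 norm_mult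
        crot_int_pow_O2 flip: O2.int_pow_consistent[OF X(1)])
qed

lemma inj_rels3_nf_cflips:
  assumes indep: "\<And>p q. (c1 * cnj c2) powi p * (c2 * cnj c3) powi q = 1 \<Longrightarrow> p = 0 \<and> q = 0"
  shows "inj (rels3_nf (O2\<lparr>carrier := X\<rparr>) (cflip c1) (cflip c2) (cflip c3))"
proof (rule injI)
  fix t t'
  assume eq: "rels3_nf (O2\<lparr>carrier := X\<rparr>) (cflip c1) (cflip c2) (cflip c3) t
    = rels3_nf (O2\<lparr>carrier := X\<rparr>) (cflip c1) (cflip c2) (cflip c3) t'"
  obtain e m n e' m' n' where t: "t = (e, m, n)" and t': "t' = (e', m', n')"
    by (cases t, cases t') auto
  define u v where "u = c1 * cnj c2" and "v = c2 * cnj c3"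
  have "u \<noteq> 0" "v \<noteq> 0" "c1 \<noteq> 0"
    using units by (auto simp: u_def v_def)
  define w w' where "w = u powi m * v powi n" and "w' = u powi m' * v powi n'"
  have "w \<noteq> 0" "w' \<noteq> 0"
    using \<open>u \<noteq> 0\<close> \<open>v \<noteq> 0\<close> by (simp_all add: w_def w'_def)
  have "rels3_nf (O2\<lparr>carrier := X\<rparr>) (cflip c1) (cflip c2) (cflip c3) t
      = (if e then cflip (c1 * cnj w) else crot w)"
    "rels3_nf (O2\<lparr>carrier := X\<rparr>) (cflip c1) (cflip c2) (cflip c3) t'
      = (if e' then cflip (c1 * cnj w') else crot w')"
    unfolding t t' w_def w'_def u_def v_def by (rule rels3_nf_cflips)+
  then have "e = e' \<and> w = w'"
    using eq \<open>c1 \<noteq> 0\<close> \<open>w \<noteq> 0\<close> \<open>w' \<noteq> 0\<close>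
      cflip_neq_crot[of "c1 * cnj w" w'] cflip_neq_crot[of "c1 * cnj w'" w]
    by (auto simp: crot_eq_iff cflip_eq_iff split: if_splits)
  then have "e = e'" and "u powi (m - m') * v powi (n - n') = 1"
    using \<open>u \<noteq> 0\<close> \<open>v \<noteq> 0\<close> \<open>w' \<noteq> 0\<close> by (simp_all add: w_def w'_def power_int_diff field_simps)
  moreover have "m = m'" "n = n'"
    using indep[of "m - m'" "n - n'"] calculation(2) by (simp_all add: u_def v_def)
  ultimately show "t = t'"
    by (simp add: t t')
qed

end

lemma generated_by_cflips_presentation:
  fixes H :: "('h, 'c) monoid_scheme"
  assumes units: "cmod c1 = 1" "cmod c2 = 1" "cmod c3 = 1"
    and indep: "\<And>p q. (c1 * cnj c2) powi p * (c2 * cnj c3) powi q = 1 \<Longrightarrow> p = 0 \<and> q = 0"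
  defines "S \<equiv> O2\<lparr>carrier := generate O2 {cflip c1, cflip c2, cflip c3}\<rparr>"
  shows "group S \<and> rels3 S (cflip c1) (cflip c2) (cflip c3)
    \<and> (\<forall>h1 h2 h3. group H \<and> rels3 H h1 h2 h3 \<longrightarrow>
         (\<exists>\<phi> \<in> hom S H. \<phi> (cflip c1) = h1 \<and> \<phi> (cflip c2) = h2 \<and> \<phi> (cflip c3) = h3 \<and>
            (\<forall>\<psi> \<in> hom S H. \<psi> (cflip c1) = h1 \<and> \<psi> (cflip c2) = h2 \<and> \<psi> (cflip c3) = h3
               \<longrightarrow> (\<forall>x \<in> carrier S. \<psi> x = \<phi> x))))"
proof -
  interpret O2: group O2 by (rule group_O2)
  define X where "X = generate O2 {cflip c1, cflip c2, cflip c3}"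
  have gens: "{cflip c1, cflip c2, cflip c3} \<subseteq> X"
    by (auto simp: X_def intro: generate.incl)
  have sub: "subgroup X O2"
    unfolding X_def using units by (intro O2.generate_is_subgroup) (auto simp: orthogonal_transformation_cflip)
  interpret S: rels3_group S "cflip c1" "cflip c2" "cflip c3"
    unfolding S_def X_def[symmetric] rels3_group_def rels3_group_axioms_def
    using O2.subgroup_imp_group[OF sub] rels3_cflips[OF sub _ _ _ units] gens by simp
  have gen: "carrier S \<subseteq> generate S {cflip c1, cflip c2, cflip c3}"
    using O2.generate_consistent[OF gens sub] by (simp add: S_def X_def)
  have inj: "inj S.nf"
    using inj_rels3_nf_cflips[OF sub _ _ _ units indep] gens by (simp add: S_def X_def)
  show ?thesis
  proof (intro conjI allI impI)
    fix h1 h2 h3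
    assume H: "group H \<and> rels3 H h1 h2 h3"
    show "\<exists>\<phi> \<in> hom S H. \<phi> (cflip c1) = h1 \<and> \<phi> (cflip c2) = h2 \<and> \<phi> (cflip c3) = h3 \<and>
            (\<forall>\<psi> \<in> hom S H. \<psi> (cflip c1) = h1 \<and> \<psi> (cflip c2) = h2 \<and> \<psi> (cflip c3) = h3
               \<longrightarrow> (\<forall>x \<in> carrier S. \<psi> x = \<phi> x))"
      using S.universal_property_if_nf_inj[OF gen inj conjunct1[OF H] conjunct2[OF H]] .
  qed (fact S.group_axioms S.rels3)+
qed

theorem proposition3p4:
  fixes A1 A2 A3 :: "real^2" and H :: "('h, 'c) monoid_scheme"
  assumes "typical_triangle A1 A2 A3"
  shows "group (S_tau A1 A2 A3)
    \<and> rels3 (S_tau A1 A2 A3) (s1 A1 A2 A3) (s2 A1 A2 A3) (s3 A1 A2 A3)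
    \<and> (\<forall>h1 h2 h3. group H \<and> rels3 H h1 h2 h3 \<longrightarrow>
         (\<exists>\<phi> \<in> hom (S_tau A1 A2 A3) H.
            \<phi> (s1 A1 A2 A3) = h1 \<and> \<phi> (s2 A1 A2 A3) = h2 \<and> \<phi> (s3 A1 A2 A3) = h3 \<and>
            (\<forall>\<psi> \<in> hom (S_tau A1 A2 A3) H.
               \<psi> (s1 A1 A2 A3) = h1 \<and> \<psi> (s2 A1 A2 A3) = h2 \<and> \<psi> (s3 A1 A2 A3) = h3
               \<longrightarrow> (\<forall>x \<in> carrier (S_tau A1 A2 A3). \<psi> x = \<phi> x))))"
proof -
  have "\<not> collinear {A1, A2, A3}"
    using assms by (simp add: typical_triangle_def)
  then have edges: "A3 - A2 \<noteq> 0" "A3 - A1 \<noteq> 0" "A2 - A1 \<noteq> 0"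
    by (auto simp: insert_commute)
  then have "s1 A1 A2 A3 = cflip (refl_unit (A3 - A2))" "s2 A1 A2 A3 = cflip (refl_unit (A3 - A1))"
    "s3 A1 A2 A3 = cflip (refl_unit (A2 - A1))"
    by (simp_all add: s1_def s2_def s3_def lin_refl_eq_cflip)
  then show ?thesis
    unfolding S_tau_def
    using generated_by_cflips_presentation[OF cmod_refl_unit[OF edges(1)] cmod_refl_unit[OF edges(2)]
        cmod_refl_unit[OF edges(3)] typical_triangle_rotations_independent[OF assms]]
    by simp
qed

end
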